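(* Let $p>3$ and $q>6p^4$ be primes, $G=\mathbb{Z}_6^5\times\mathbb{Z}_q$, $H=\mathbb{Z}_p^4$, let $A\subset G$ be the set defined in the context (which is a tile of $G$) and let $B\subset H$ be a spectral set with $|B|=2p$. Then for every map $t:A\to H$, the set $P_t=\bigcup_{a\in A}\{a\}\times(t(a)+B)$ pd-tiles $G\times H$ weakly.
   Context: For a finite abelian group $E$, a set $X\subset E$ pd-tiles $E$ (weakly) if there is a nonnegative function $h:E\to\mathbb{R}$ with $h(0)=1$, $1_X*h=1_E$ (convolution), and $\hat h\ge 0$, where $\hat f(\gamma)=\sum_{x\in E}f(x)\gamma(x)$ for characters $\gamma$. Known fact (may be used): in a finite abelian group, every tile and every spectral set pd-tiles the group; the set $A$ below tiles $G$. A set $X$ is spectral if there is a set $S$ of characters with $|S|=|X|$ and $\hat 1_X(s-s')=0$ for distinct $s,s'\in S$; it is a tile if there is $\Lambda$ with $X+\Lambda=E$ with each element uniquely represented. Construction of $A$: let $v=(1,2,3,4,5)\in\mathbb{Z}_6^5$; for $\pi\in S_5$ let $\pi(v)$ be the vector with permuted coordinates and $A_\pi=\{x\in\mathbb{Z}_6^5:\langle \pi(v),x\rangle\equiv 0\pmod 6\}$. Enumerate $S_5$ as $\pi_0,\dots,\pi_{119}$; for $0\le k\le119$ set $A_k=A_{\pi_k}\times\{k\}$, for $120\le k\le q-1$ set $A_k=A_{\pi_0}\times\{k\}$, and $A=\bigcup_{k=0}^{q-1}A_k$. *)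

theory Defs
  imports "HOL-Analysis.Analysis" "HOL-Combinatorics.Permutations"
begin

text \<open>A finite abelian group Z_{m_0} x ... x Z_{m_{n-1}} represented concretely:
  elements are integer lists x of length n with 0 <= x!i < m!i; the group operation is
  componentwise addition modulo m!i.\<close>

definition grp :: "int list \<Rightarrow> int list set" where
  "grp ms = {x. length x = length ms \<and> (\<forall>i<length ms. 0 \<le> x!i \<and> x!i < ms!i)}"

definition gzero :: "int list \<Rightarrow> int list" where
  "gzero ms = replicate (length ms) 0"

definition gadd :: "int list \<Rightarrow> int list \<Rightarrow> int list \<Rightarrow> int list" where
  "gadd ms x y = map (\<lambda>i. (x!i + y!i) mod ms!i) [0..<length ms]"

definition gsub :: "int list \<Rightarrow> int list \<Rightarrow> int list \<Rightarrow> int list" where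
  "gsub ms x y = map (\<lambda>i. (x!i - y!i) mod ms!i) [0..<length ms]"

text \<open>Every character arises this way, and
  the difference of characters s - s' corresponds to gsub of the indices.\<close>

definition chr :: "int list \<Rightarrow> int list \<Rightarrow> int list \<Rightarrow> complex" where
  "chr ms \<xi> x = cis (2 * pi * (\<Sum>i<length ms. real_of_int (\<xi>!i * x!i) / real_of_int (ms!i)))"

definition fourier :: "int list \<Rightarrow> (int list \<Rightarrow> complex) \<Rightarrow> int list \<Rightarrow> complex" where
  "fourier ms f \<xi> = (\<Sum>x\<in>grp ms. f x * chr ms \<xi> x)"

definition pd_tiles :: "int list \<Rightarrow> int list set \<Rightarrow> bool" where
  "pd_tiles ms X \<longleftrightarrow> (\<exists>h :: int list \<Rightarrow> real.
      (\<forall>x\<in>grp ms. 0 \<le> h x) \<and> h (gzero ms) = 1 \<and>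
      (\<forall>x\<in>grp ms. (\<Sum>y\<in>grp ms. (if y \<in> X then 1 else 0) * h (gsub ms x y)) = 1) \<and>
      (\<forall>\<xi>\<in>grp ms. Im (fourier ms (\<lambda>x. complex_of_real (h x)) \<xi>) = 0
                   \<and> 0 \<le> Re (fourier ms (\<lambda>x. complex_of_real (h x)) \<xi>)))"

definition spectral :: "int list \<Rightarrow> int list set \<Rightarrow> bool" where
  "spectral ms X \<longleftrightarrow> (\<exists>S \<subseteq> grp ms. card S = card X \<and>
      (\<forall>s\<in>S. \<forall>s'\<in>S. s \<noteq> s' \<longrightarrow>
          fourier ms (\<lambda>x. if x \<in> X then 1 else 0) (gsub ms s s') = 0))"

text \<open>A_pi for v = (1,...,5), coordinates indexed 0..4: pi(v)_i = v_{pi i} = pi i + 1.\<close>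

definition A_perm :: "(nat \<Rightarrow> nat) \<Rightarrow> int list set" where
  "A_perm \<pi> = {x \<in> grp (replicate 5 6). (\<Sum>i<5. int (\<pi> i + 1) * x!i) mod 6 = 0}"

text \<open>The set A in Z_6^5 x Z_q (elements x @ [k]) for an enumeration e of S_5.\<close>

definition A_set :: "(nat \<Rightarrow> nat \<Rightarrow> nat) \<Rightarrow> nat \<Rightarrow> int list set" where
  "A_set e q = {x @ [int k] | x k. k < q \<and> x \<in> A_perm (e (if k < 120 then k else 0))}"

definition P_set :: "int list \<Rightarrow> int list set \<Rightarrow> (int list \<Rightarrow> int list) \<Rightarrow> int list set \<Rightarrow> int list set" where
  "P_set Hms A t B = {a @ gadd Hms (t a) b | a b. a \<in> A \<and> b \<in> B}"

end

theory Submission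
  imports Defs
begin

(* The witness is a tensor product h = h_G (x) h_H.  On Lambda = {0, e_0, ..., e_4} the weights
   <pi(v), .> mod 6 take every value 0..5 exactly once, so A_pi is tiled by Lambda, and A is tiled
   by Lambda x {0}.  For any tiling A + Lambda = G the function h_G = 1_Lambda * 1_(-Lambda) / |Lambda|
   has 1_A * h_G = 1 and Fourier transform |hat 1_Lambda|^2 / |Lambda| >= 0.  For a spectrum S of B the
   function h_H = |sum_(s in S) s|^2 / |S|^2 has 1_B * h_H = 1 by the orthogonality of S on B, and a
   nonnegative Fourier transform because every character sum over H is nonnegative.  Translating
   the fibres of P_t by t(a) leaves sum_b h_H (y - t(a) - b) = 1 unchanged, so 1_(P_t) * h = 1_A * h_G = 1,
   while hat h = hat h_G (x) hat h_H >= 0. *)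

section \<open>Finite abelian groups as coordinate lists\<close>


lemma grp_length: "x \<in> grp ms \<Longrightarrow> length x = length ms"
  by (simp add: grp_def)

lemma finite_grp: "finite (grp ms)"
proof (rule finite_subset)
  show "grp ms \<subseteq> {x. set x \<subseteq> (\<Union>i<length ms. {0..<ms!i}) \<and> length x = length ms}"
    by (fastforce simp: grp_def in_set_conv_nth)
  show "finite {x. set x \<subseteq> (\<Union>i<length ms. {0..<ms!i}) \<and> length x = length ms}"
    by (intro finite_lists_length_eq) auto
qed

lemma append_mem_grp:
  assumes "length g = length m1"
  shows "g @ y \<in> grp (m1 @ m2) \<longleftrightarrow> g \<in> grp m1 \<and> y \<in> grp m2"
proof -
  have "(\<forall>i<length m1 + length m2. P i) \<longleftrightarrow> (\<forall>i<length m1. P i) \<and> (\<forall>j<length m2. P (length m1 + j))"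
    for P
  proof -
    have "P i" if "\<forall>i<length m1. P i" "\<forall>j<length m2. P (length m1 + j)" "i < length m1 + length m2" for i
      using that(1) that(2)[rule_format, of "i - length m1"] that(3) by (cases "i < length m1") auto
    then show ?thesis
      by auto
  qed
  then show ?thesis
    using assms by (auto simp: grp_def nth_append)
qed

lemma grp_append: "grp (m1 @ m2) = (\<lambda>(g, y). g @ y) ` (grp m1 \<times> grp m2)"
proof (intro set_eqI iffI)
  fix x assume x: "x \<in> grp (m1 @ m2)"
  then have "take (length m1) x \<in> grp m1" "drop (length m1) x \<in> grp m2"
    using append_mem_grp[of "take (length m1) x" m1 "drop (length m1) x" m2]
    by (auto simp: grp_length)
  then show "x \<in> (\<lambda>(g, y). g @ y) ` (grp m1 \<times> grp m2)"
    by (intro image_eqI[of _ _ "(take (length m1) x, drop (length m1) x)"]) auto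
qed (auto simp: append_mem_grp grp_length)

lemma grp_appendE:
  assumes "x \<in> grp (m1 @ m2)"
  obtains g y where "x = g @ y" "g \<in> grp m1" "y \<in> grp m2"
  using assms by (auto simp: grp_append)

lemma sum_grp_append:
  "(\<Sum>x\<in>grp (m1 @ m2). f x) = (\<Sum>g\<in>grp m1. \<Sum>y\<in>grp m2. f (g @ y))"
proof -
  have "inj_on (\<lambda>(g, y). g @ y) (grp m1 \<times> grp m2)"
    by (auto simp: inj_on_def grp_length)
  then show ?thesis
    by (simp add: grp_append sum.reindex sum.cartesian_product finite_grp case_prod_unfold)
qed

lemma nth_gadd [simp]: "i < length ms \<Longrightarrow> gadd ms x y ! i = (x!i + y!i) mod ms!i"
  by (simp add: gadd_def)

lemma nth_gsub [simp]: "i < length ms \<Longrightarrow> gsub ms x y ! i = (x!i - y!i) mod ms!i"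
  by (simp add: gsub_def)

lemma length_gadd [simp]: "length (gadd ms x y) = length ms"
  by (simp add: gadd_def)

lemma length_gsub [simp]: "length (gsub ms x y) = length ms"
  by (simp add: gsub_def)

lemma nth_moduli_pos: "set ms \<subseteq> {0<..} \<Longrightarrow> i < length ms \<Longrightarrow> 0 < ms!i"
  using nth_mem by fastforce

lemma gadd_in_grp: "set ms \<subseteq> {0<..} \<Longrightarrow> gadd ms x y \<in> grp ms"
  by (simp add: grp_def nth_moduli_pos)

lemma gsub_in_grp: "set ms \<subseteq> {0<..} \<Longrightarrow> gsub ms x y \<in> grp ms"
  by (simp add: grp_def nth_moduli_pos)

lemma gzero_in_grp: "set ms \<subseteq> {0<..} \<Longrightarrow> gzero ms \<in> grp ms"
  by (simp add: grp_def gzero_def nth_moduli_pos)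

lemma length_gzero [simp]: "length (gzero ms) = length ms"
  by (simp add: gzero_def)

lemma gzero_append: "gzero (m1 @ m2) = gzero m1 @ gzero m2"
  by (simp add: gzero_def replicate_add)

lemma gsub_append:
  "length g = length m1 \<Longrightarrow> length a = length m1 \<Longrightarrow>
    gsub (m1 @ m2) (g @ y) (a @ b) = gsub m1 g a @ gsub m2 y b"
  by (rule nth_equalityI) (auto simp: nth_append)

lemma mod_nth_grp: "x \<in> grp ms \<Longrightarrow> i < length ms \<Longrightarrow> x!i mod ms!i = x!i"
  by (simp add: grp_def)

lemma grp_eq_iff_mod:
  "x \<in> grp ms \<Longrightarrow> y \<in> grp ms \<Longrightarrow> x = y \<longleftrightarrow> (\<forall>i<length ms. x!i mod ms!i = y!i mod ms!i)"
  by (auto simp: mod_nth_grp grp_length intro: nth_equalityI)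

lemma gsub_gadd_right:
  "gsub ms y (gadd ms u b) = gsub ms (gsub ms y u) b"
  by (rule nth_equalityI) (simp_all add: mod_diff_right_eq mod_diff_left_eq diff_diff_eq)

lemma gsub_eq_gsub_iff:
  assumes "set ms \<subseteq> {0<..}" "a \<in> grp ms"
  shows "gsub ms g a = gsub ms c c' \<longleftrightarrow> a = gsub ms (gadd ms g c') c"
proof -
  have "(g!i - a!i) mod m = (c!i - c'!i) mod m \<longleftrightarrow> a!i mod m = ((g!i + c'!i) mod m - c!i) mod m"
    for i and m :: int
    by (simp add: mod_diff_left_eq mod_eq_dvd_iff) (smt (verit) dvd_minus_iff)
  then show ?thesis
    using grp_eq_iff_mod[OF gsub_in_grp gsub_in_grp, of ms] grp_eq_iff_mod[OF assms(2) gsub_in_grp]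
    using assms(1) by (simp add: mod_nth_grp[OF assms(2)])
qed

lemma gsub_eq_gzero_iff:
  assumes "x \<in> grp ms" "y \<in> grp ms"
  shows "gsub ms x y = gzero ms \<longleftrightarrow> x = y"
proof -
  have "gsub ms x y = gzero ms \<longleftrightarrow> (\<forall>i<length ms. (x!i - y!i) mod ms!i = 0)"
    by (simp add: list_eq_iff_nth_eq gzero_def)
  also have "\<dots> \<longleftrightarrow> (\<forall>i<length ms. x!i mod ms!i = y!i mod ms!i)"
    by (simp add: mod_eq_dvd_iff dvd_eq_mod_eq_0)
  finally show ?thesis
    using grp_eq_iff_mod[OF assms] by simp
qed

lemma inj_on_gadd: "inj_on (gadd ms u) (grp ms)"
proof (rule inj_onI)
  fix b b' assume b: "b \<in> grp ms" "b' \<in> grp ms" and eq: "gadd ms u b = gadd ms u b'"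
  have "(u!i + b!i) mod ms!i = (u!i + b'!i) mod ms!i" if "i < length ms" for i
    using arg_cong[OF eq, of "\<lambda>x. x!i"] that by simp
  then have "b!i mod ms!i = b'!i mod ms!i" if "i < length ms" for i
    using that by (simp add: mod_eq_dvd_iff)
  then show "b = b'"
    using grp_eq_iff_mod[OF b] by blast
qed

lemma sum_grp_translate:
  assumes "set ms \<subseteq> {0<..}"
  shows "(\<Sum>y\<in>grp ms. f (gadd ms u y)) = (\<Sum>y\<in>grp ms. f y)"
proof -
  have "gadd ms u ` grp ms = grp ms"
    using assms by (intro endo_inj_surj finite_grp inj_on_gadd) (auto intro: gadd_in_grp)
  then show ?thesis
    using sum.reindex[OF inj_on_gadd, of f ms u] by simp
qed

section \<open>Characters\<close>

definition unit_root :: "int \<Rightarrow> int \<Rightarrow> complex" where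
  "unit_root m k = cis (2 * pi * (real_of_int k / real_of_int m))"

lemma unit_root_add: "unit_root m (a + b) = unit_root m a * unit_root m b"
  by (simp add: unit_root_def cis_mult add_divide_distrib distrib_left)

lemma unit_root_diff: "unit_root m (a - b) = unit_root m a * cnj (unit_root m b)"
  by (simp add: unit_root_def cis_cnj cis_mult diff_divide_distrib right_diff_distrib)

lemma unit_root_mod_eq:
  assumes "a mod m = b mod m"
  shows "unit_root m a = unit_root m b"
proof (cases "m = 0")
  case False
  obtain k where "a = b + m * k"
    using assms by (metis mod_eq_dvd_iff dvdE add_diff_cancel_left' diff_add_cancel)
  then have "2 * pi * (real_of_int a / real_of_int m) = 2 * pi * (real_of_int b / real_of_int m) + 2 * pi * real_of_int k"
    using False by (simp add: field_simps)
  then show ?thesis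
    by (simp add: unit_root_def cis_mult[symmetric])
qed (use assms in simp)

lemma cis_sum: "cis (\<Sum>i\<in>I. f i) = (\<Prod>i\<in>I. cis (f i))"
  by (induction I rule: infinite_finite_induct) (simp_all add: cis_mult[symmetric])

lemma chr_eq_prod: "chr ms \<xi> x = (\<Prod>i<length ms. unit_root (ms!i) (\<xi>!i * x!i))"
  by (simp add: chr_def unit_root_def sum_distrib_left cis_sum)

lemma chr_commute: "chr ms \<xi> x = chr ms x \<xi>"
  by (simp add: chr_def mult.commute)

lemma norm_chr [simp]: "norm (chr ms \<xi> x) = 1"
  by (simp add: chr_def)

lemma chr_mult_cnj [simp]: "chr ms \<xi> x * cnj (chr ms \<xi> x) = 1"
  by (simp flip: complex_norm_square)

lemma chr_gzero [simp]: "chr ms \<xi> (gzero ms) = 1"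
  by (simp add: chr_def gzero_def)

lemma chr_gadd: "chr ms \<xi> (gadd ms x y) = chr ms \<xi> x * chr ms \<xi> y"
proof -
  have "unit_root (ms!i) (\<xi>!i * ((x!i + y!i) mod ms!i)) = unit_root (ms!i) (\<xi>!i * x!i + \<xi>!i * y!i)" for i
    by (rule unit_root_mod_eq) (simp add: mod_mult_right_eq distrib_left)
  then show ?thesis
    by (simp add: chr_eq_prod unit_root_add prod.distrib)
qed

lemma chr_gsub: "chr ms \<xi> (gsub ms x y) = chr ms \<xi> x * cnj (chr ms \<xi> y)"
proof -
  have "unit_root (ms!i) (\<xi>!i * ((x!i - y!i) mod ms!i)) = unit_root (ms!i) (\<xi>!i * x!i - \<xi>!i * y!i)" for i
    by (rule unit_root_mod_eq) (simp add: mod_mult_right_eq right_diff_distrib)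
  then show ?thesis
    by (simp add: chr_eq_prod unit_root_diff prod.distrib)
qed

lemma chr_append:
  assumes "length \<xi> = length m1" "length x = length m1"
  shows "chr (m1 @ m2) (\<xi> @ \<xi>') (x @ y) = chr m1 \<xi> x * chr m2 \<xi>' y"
proof -
  have split: "(\<Prod>i<n + k. F i) = (\<Prod>i<n. F i) * (\<Prod>i<k. F (n + i))" for n k and F :: "nat \<Rightarrow> complex"
    by (induction k) (simp_all add: mult.assoc)
  show ?thesis
    using split[of "\<lambda>i. unit_root ((m1 @ m2)!i) ((\<xi> @ \<xi>')!i * (x @ y)!i)" "length m1" "length m2"]
    by (simp add: chr_eq_prod assms nth_append)
qed

text \<open>Translation invariance: a character sum is either the trivial one, \<open>card (grp ms)\<close>, or
  is fixed under multiplication by a character value \<open>\<noteq> 1\<close>, hence zero.\<close>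

lemma character_sum_nonneg:
  assumes "set ms \<subseteq> {0<..}"
  shows "0 \<le> (\<Sum>y\<in>grp ms. chr ms \<eta> y)"
proof (cases "\<forall>u\<in>grp ms. chr ms \<eta> u = 1")
  case True
  then show ?thesis by (simp add: less_eq_complex_def)
next
  case False
  then obtain u where "u \<in> grp ms" "chr ms \<eta> u \<noteq> 1" by blast
  moreover have "(\<Sum>y\<in>grp ms. chr ms \<eta> y) = chr ms \<eta> u * (\<Sum>y\<in>grp ms. chr ms \<eta> y)"
    using sum_grp_translate[OF assms, of "chr ms \<eta>" u] by (simp add: chr_gadd sum_distrib_left)
  ultimately show ?thesis by simp
qed

lemma fourier_append:
  assumes "length \<xi> = length m1"
  shows "fourier (m1 @ m2) (\<lambda>x. f (take (length m1) x) * g (drop (length m1) x)) (\<xi> @ \<xi>') =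
    fourier m1 f \<xi> * fourier m2 g \<xi>'"
  by (simp add: fourier_def sum_grp_append chr_append assms grp_length sum_product algebra_simps
      cong: sum.cong)

section \<open>Weak pd-tilings from tiles and from spectral sets\<close>

lemma pd_tiles_iff:
  assumes "X \<subseteq> grp ms"
  shows "pd_tiles ms X \<longleftrightarrow> (\<exists>h. (\<forall>x\<in>grp ms. 0 \<le> h x) \<and> h (gzero ms) = 1 \<and>
    (\<forall>x\<in>grp ms. (\<Sum>y\<in>X. h (gsub ms x y)) = 1) \<and>
    (\<forall>\<xi>\<in>grp ms. 0 \<le> fourier ms (\<lambda>x. complex_of_real (h x)) \<xi>))"
proof -
  have "(\<Sum>y\<in>grp ms. (if y \<in> X then 1 else 0) * h (gsub ms x y)) = (\<Sum>y\<in>X. h (gsub ms x y))"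
    for h :: "int list \<Rightarrow> real" and x
  proof -
    have "(\<Sum>y\<in>grp ms. (if y \<in> X then 1 else 0) * h (gsub ms x y)) = (\<Sum>y\<in>grp ms \<inter> X. h (gsub ms x y))"
      unfolding sum.inter_restrict[OF finite_grp] by (rule sum.cong) simp_all
    then show ?thesis
      using assms by (simp add: Int_absorb1)
  qed
  then show ?thesis
    unfolding pd_tiles_def less_eq_complex_def by auto
qed

definition tiling :: "int list \<Rightarrow> int list set \<Rightarrow> int list set \<Rightarrow> bool" where
  "tiling ms A \<Lambda> \<longleftrightarrow> A \<subseteq> grp ms \<and> \<Lambda> \<subseteq> grp ms \<and> (\<forall>x\<in>grp ms. card {c\<in>\<Lambda>. gsub ms x c \<in> A} = 1)"

definition tile_witness :: "int list \<Rightarrow> int list set \<Rightarrow> int list \<Rightarrow> real" where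
  "tile_witness ms \<Lambda> w = (\<Sum>c'\<in>\<Lambda>. \<Sum>c\<in>\<Lambda>. if gsub ms c c' = w then 1 else 0) / card \<Lambda>"

lemma tiling_nonempty: "tiling ms A \<Lambda> \<Longrightarrow> x \<in> grp ms \<Longrightarrow> \<Lambda> \<noteq> {}"
  by (force simp: tiling_def)

lemma tile_witness_gzero:
  assumes "\<Lambda> \<subseteq> grp ms" "\<Lambda> \<noteq> {}"
  shows "tile_witness ms \<Lambda> (gzero ms) = 1"
proof -
  have "finite \<Lambda>"
    using assms(1) finite_grp finite_subset by blast
  moreover have "gsub ms c c' = gzero ms \<longleftrightarrow> c' = c" if "c \<in> \<Lambda>" "c' \<in> \<Lambda>" for c c'
    using gsub_eq_gzero_iff that assms(1) by blast
  ultimately show ?thesis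
    using assms(2) by (simp add: tile_witness_def cong: sum.cong)
qed

lemma tile_witness_conv:
  assumes "set ms \<subseteq> {0<..}" "tiling ms A \<Lambda>" "g \<in> grp ms"
  shows "(\<Sum>a\<in>A. tile_witness ms \<Lambda> (gsub ms g a)) = 1"
proof -
  have A: "A \<subseteq> grp ms" and \<Lambda>: "\<Lambda> \<subseteq> grp ms"
    using assms(2) by (auto simp: tiling_def)
  have fin: "finite A" "finite \<Lambda>"
    using A \<Lambda> finite_grp finite_subset by blast+
  have "(\<Sum>c\<in>\<Lambda>. \<Sum>a\<in>A. if gsub ms c c' = gsub ms g a then 1 else 0) = (1::real)"
    if "c' \<in> \<Lambda>" for c'
  proof -
    have "gsub ms c c' = gsub ms g a \<longleftrightarrow> a = gsub ms (gadd ms g c') c" if "a \<in> A" for a c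
      using gsub_eq_gsub_iff[OF assms(1), of a g c c'] A that by auto
    then have "(\<Sum>c\<in>\<Lambda>. \<Sum>a\<in>A. if gsub ms c c' = gsub ms g a then 1 else 0) =
        (\<Sum>c\<in>\<Lambda>. if gsub ms (gadd ms g c') c \<in> A then 1 else (0::real))"
      using fin by (simp cong: sum.cong)
    also have "\<dots> = card {c\<in>\<Lambda>. gsub ms (gadd ms g c') c \<in> A}"
      using fin by (simp add: sum.inter_filter[symmetric])
    also have "\<dots> = 1"
      using assms(1,2) by (simp add: tiling_def gadd_in_grp)
    finally show ?thesis .
  qed
  then have "(\<Sum>c'\<in>\<Lambda>. \<Sum>c\<in>\<Lambda>. \<Sum>a\<in>A. if gsub ms c c' = gsub ms g a then 1 else 0) = real (card \<Lambda>)"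
    by simp
  moreover have "(\<Sum>a\<in>A. \<Sum>c'\<in>\<Lambda>. \<Sum>c\<in>\<Lambda>. if gsub ms c c' = gsub ms g a then 1 else 0) =
      (\<Sum>c'\<in>\<Lambda>. \<Sum>c\<in>\<Lambda>. \<Sum>a\<in>A. if gsub ms c c' = gsub ms g a then 1 else (0::real))"
    by (simp add: sum.swap[of _ _ A])
  moreover have "\<Lambda> \<noteq> {}"
    using tiling_nonempty assms(2,3) by blast
  ultimately show ?thesis
    using fin by (simp add: tile_witness_def sum_divide_distrib[symmetric])
qed

lemma fourier_tile_witness_nonneg:
  assumes "set ms \<subseteq> {0<..}"
  shows "0 \<le> fourier ms (\<lambda>w. complex_of_real (tile_witness ms \<Lambda> w)) \<xi>"
proof -
  let ?S = "\<Sum>c\<in>\<Lambda>. chr ms \<xi> c"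
  have "fourier ms (\<lambda>w. complex_of_real (tile_witness ms \<Lambda> w)) \<xi> =
      (\<Sum>w\<in>grp ms. \<Sum>c'\<in>\<Lambda>. \<Sum>c\<in>\<Lambda>. if gsub ms c c' = w then chr ms \<xi> w else 0) / of_nat (card \<Lambda>)"
  proof -
    have "complex_of_real (tile_witness ms \<Lambda> w) * chr ms \<xi> w =
        (\<Sum>c'\<in>\<Lambda>. \<Sum>c\<in>\<Lambda>. if gsub ms c c' = w then chr ms \<xi> w else 0) / of_nat (card \<Lambda>)" for w
      by (simp add: tile_witness_def sum_distrib_right if_distrib[of complex_of_real]
          if_distrib[of "\<lambda>x. x * chr ms \<xi> w"] cong: if_cong)
    then show ?thesis
      by (simp add: fourier_def sum_divide_distrib)
  qed
  also have "\<dots> = (\<Sum>c'\<in>\<Lambda>. \<Sum>c\<in>\<Lambda>. \<Sum>w\<in>grp ms. if gsub ms c c' = w then chr ms \<xi> w else 0) / of_nat (card \<Lambda>)"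
    by (simp add: sum.swap[of _ _ "grp ms"])
  also have "\<dots> = (\<Sum>c'\<in>\<Lambda>. \<Sum>c\<in>\<Lambda>. chr ms \<xi> c * cnj (chr ms \<xi> c')) / of_nat (card \<Lambda>)"
    using assms by (simp add: finite_grp gsub_in_grp chr_gsub)
  also have "\<dots> = ?S * cnj ?S / of_nat (card \<Lambda>)"
    by (subst sum.swap) (simp add: sum_product)
  also have "\<dots> = complex_of_real ((norm ?S)\<^sup>2 / card \<Lambda>)"
    unfolding of_real_divide complex_norm_square by simp
  finally show ?thesis
    by (simp add: less_eq_complex_def)
qed

lemma pd_tiles_if_tiling:
  assumes "set ms \<subseteq> {0<..}" "tiling ms A \<Lambda>"
  shows "pd_tiles ms A"
proof -
  have A: "A \<subseteq> grp ms" and \<Lambda>: "\<Lambda> \<subseteq> grp ms"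
    using assms(2) by (auto simp: tiling_def)
  have "\<Lambda> \<noteq> {}"
    using tiling_nonempty assms(2) gzero_in_grp[OF assms(1)] by blast
  moreover have "0 \<le> tile_witness ms \<Lambda> w" for w
    by (simp add: tile_witness_def sum_nonneg)
  ultimately show ?thesis
    unfolding pd_tiles_iff[OF A]
    using assms \<Lambda>
    by (intro exI[of _ "tile_witness ms \<Lambda>"] conjI ballI)
      (simp_all add: tile_witness_gzero tile_witness_conv fourier_tile_witness_nonneg)
qed

lemma fourier_indicator:
  "B \<subseteq> grp ms \<Longrightarrow> fourier ms (\<lambda>x. if x \<in> B then 1 else 0) \<xi> = (\<Sum>b\<in>B. chr ms \<xi> b)"
  by (simp add: fourier_def if_distrib[of "\<lambda>x. x * _"] sum.inter_restrict[symmetric] finite_grp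
      Int_absorb1 cong: if_cong)

lemma spectrum_parseval:
  assumes B: "B \<subseteq> grp ms" and "finite S"
    and orth: "\<forall>s\<in>S. \<forall>s'\<in>S. s \<noteq> s' \<longrightarrow> fourier ms (\<lambda>x. if x \<in> B then 1 else 0) (gsub ms s s') = 0"
  shows "(\<Sum>b\<in>B. (norm (\<Sum>s\<in>S. \<alpha> s * cnj (chr ms s b)))\<^sup>2) = card B * (\<Sum>s\<in>S. (norm (\<alpha> s))\<^sup>2)"
proof -
  have inner: "(\<Sum>b\<in>B. cnj (chr ms s b) * chr ms s' b) = (if s = s' then of_nat (card B) else 0)"
    if "s \<in> S" "s' \<in> S" for s s'
  proof (cases "s = s'")
    case True
    then show ?thesis
      by (simp add: mult.commute)
  next
    case False
    have "cnj (chr ms s b) * chr ms s' b = chr ms (gsub ms s' s) b" for b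
      by (simp add: chr_commute[of ms _ b] chr_gsub mult.commute)
    then show ?thesis
      using orth that False fourier_indicator[OF B] by simp
  qed
  have "complex_of_real (\<Sum>b\<in>B. (norm (\<Sum>s\<in>S. \<alpha> s * cnj (chr ms s b)))\<^sup>2) =
      (\<Sum>b\<in>B. \<Sum>s\<in>S. \<Sum>s'\<in>S. \<alpha> s * cnj (\<alpha> s') * (cnj (chr ms s b) * chr ms s' b))"
    unfolding of_real_sum complex_norm_square by (simp add: sum_product algebra_simps)
  also have "\<dots> = (\<Sum>s\<in>S. \<Sum>s'\<in>S. \<alpha> s * cnj (\<alpha> s') * (\<Sum>b\<in>B. cnj (chr ms s b) * chr ms s' b))"
    by (simp add: sum_distrib_left sum.swap[of _ _ B])
  also have "\<dots> = (\<Sum>s\<in>S. \<alpha> s * cnj (\<alpha> s) * of_nat (card B))"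
    using \<open>finite S\<close> by (simp add: inner if_distrib cong: sum.cong if_cong)
  also have "\<dots> = complex_of_real (card B * (\<Sum>s\<in>S. (norm (\<alpha> s))\<^sup>2))"
    unfolding of_real_mult of_real_sum complex_norm_square by (simp add: sum_distrib_left mult_ac)
  finally show ?thesis
    using of_real_eq_iff by blast
qed

definition spectral_witness :: "int list \<Rightarrow> int list set \<Rightarrow> int list \<Rightarrow> real" where
  "spectral_witness ms S y = (norm (\<Sum>s\<in>S. chr ms s y))\<^sup>2 / (card S)\<^sup>2"

lemma spectral_witness_gzero:
  "finite S \<Longrightarrow> S \<noteq> {} \<Longrightarrow> spectral_witness ms S (gzero ms) = 1"
  by (simp add: spectral_witness_def)

lemma spectral_witness_conv:
  assumes "B \<subseteq> grp ms" "finite S" "card S = card B" "B \<noteq> {}"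
    and "\<forall>s\<in>S. \<forall>s'\<in>S. s \<noteq> s' \<longrightarrow> fourier ms (\<lambda>x. if x \<in> B then 1 else 0) (gsub ms s s') = 0"
  shows "(\<Sum>b\<in>B. spectral_witness ms S (gsub ms y b)) = 1"
proof -
  have "finite B"
    using assms(1) finite_grp finite_subset by blast
  have "(\<Sum>b\<in>B. spectral_witness ms S (gsub ms y b)) =
      (\<Sum>b\<in>B. (norm (\<Sum>s\<in>S. chr ms s y * cnj (chr ms s b)))\<^sup>2) / (card S)\<^sup>2"
    by (simp add: spectral_witness_def chr_gsub sum_divide_distrib)
  also have "\<dots> = 1"
    using spectrum_parseval[OF assms(1,2,5), of "\<lambda>s. chr ms s y"] assms(3,4) \<open>finite B\<close>
    by (simp add: power2_eq_square)
  finally show ?thesis .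
qed

lemma fourier_spectral_witness_nonneg:
  assumes "set ms \<subseteq> {0<..}"
  shows "0 \<le> fourier ms (\<lambda>y. complex_of_real (spectral_witness ms S y)) \<xi>"
proof -
  have "complex_of_real (spectral_witness ms S y) * chr ms \<xi> y =
      complex_of_real (1 / (card S)\<^sup>2) * (\<Sum>s\<in>S. \<Sum>s'\<in>S. chr ms (gadd ms \<xi> (gsub ms s s')) y)" for y
  proof -
    have "complex_of_real ((norm (\<Sum>s\<in>S. chr ms s y))\<^sup>2) = (\<Sum>s\<in>S. \<Sum>s'\<in>S. chr ms y s * cnj (chr ms y s'))"
      unfolding complex_norm_square by (simp add: sum_product chr_commute[of ms _ y])
    then show ?thesis
      by (simp add: spectral_witness_def chr_commute[of ms _ y] chr_gadd chr_gsub sum_distrib_left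
          sum_distrib_right sum_divide_distrib algebra_simps)
  qed
  then have "fourier ms (\<lambda>y. complex_of_real (spectral_witness ms S y)) \<xi> =
      complex_of_real (1 / (card S)\<^sup>2) * (\<Sum>s\<in>S. \<Sum>s'\<in>S. \<Sum>y\<in>grp ms. chr ms (gadd ms \<xi> (gsub ms s s')) y)"
    by (simp add: fourier_def sum_divide_distrib[symmetric] sum.swap[of _ _ "grp ms"])
  also have "0 \<le> \<dots>"
    using assms by (intro mult_nonneg_nonneg sum_nonneg character_sum_nonneg)
      (simp_all add: less_eq_complex_def)
  finally show ?thesis .
qed

lemma pd_tiles_if_spectral:
  assumes "set ms \<subseteq> {0<..}" "X \<subseteq> grp ms" "X \<noteq> {}" "spectral ms X"
  shows "pd_tiles ms X"
proof -
  obtain S where S: "S \<subseteq> grp ms" "card S = card X"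
    and orth: "\<forall>s\<in>S. \<forall>s'\<in>S. s \<noteq> s' \<longrightarrow> fourier ms (\<lambda>x. if x \<in> X then 1 else 0) (gsub ms s s') = 0"
    using assms(4) by (auto simp: spectral_def)
  have "finite X" "finite S"
    using assms(2) S(1) finite_grp finite_subset by blast+
  moreover have "S \<noteq> {}"
    using S(2) assms(3) \<open>finite X\<close> by auto
  moreover have "0 \<le> spectral_witness ms S y" for y
    by (simp add: spectral_witness_def)
  ultimately show ?thesis
    unfolding pd_tiles_iff[OF assms(2)]
    using assms S(2) orth
    by (intro exI[of _ "spectral_witness ms S"] conjI ballI)
      (simp_all add: spectral_witness_gzero spectral_witness_conv fourier_spectral_witness_nonneg)
qed

section \<open>The fibred product \<open>P_set\<close>\<close>

lemma pd_tiles_P_set: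
  assumes pos: "set m2 \<subseteq> {0<..}" and A: "A \<subseteq> grp m1" and B: "B \<subseteq> grp m2"
    and t: "\<forall>a\<in>A. t a \<in> grp m2"
    and "pd_tiles m1 A" "pd_tiles m2 B"
  shows "pd_tiles (m1 @ m2) (P_set m2 A t B)"
proof -
  let ?n = "length m1"
  obtain h1 where h1: "\<forall>x\<in>grp m1. 0 \<le> h1 x" "h1 (gzero m1) = 1"
      "\<forall>x\<in>grp m1. (\<Sum>a\<in>A. h1 (gsub m1 x a)) = 1"
      "\<forall>\<xi>\<in>grp m1. 0 \<le> fourier m1 (\<lambda>x. complex_of_real (h1 x)) \<xi>"
    using assms(5) pd_tiles_iff[OF A] by blast
  obtain h2 where h2: "\<forall>y\<in>grp m2. 0 \<le> h2 y" "h2 (gzero m2) = 1"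
      "\<forall>y\<in>grp m2. (\<Sum>b\<in>B. h2 (gsub m2 y b)) = 1"
      "\<forall>\<xi>\<in>grp m2. 0 \<le> fourier m2 (\<lambda>y. complex_of_real (h2 y)) \<xi>"
    using assms(6) pd_tiles_iff[OF B] by blast
  define h where "h x = h1 (take ?n x) * h2 (drop ?n x)" for x
  have h_append: "h (g @ y) = h1 g * h2 y" if "length g = ?n" for g y
    using that by (simp add: h_def)
  have P: "P_set m2 A t B = (\<lambda>(a, b). a @ gadd m2 (t a) b) ` (A \<times> B)"
    by (auto simp: P_set_def)
  have inj: "inj_on (\<lambda>(a, b). a @ gadd m2 (t a) b) (A \<times> B)"
  proof (rule inj_onI, clarify)
    fix a b a' b' assume ab: "a \<in> A" "b \<in> B" "a' \<in> A" "b' \<in> B"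
      and eq: "a @ gadd m2 (t a) b = a' @ gadd m2 (t a') b'"
    have "a \<in> grp m1" "a' \<in> grp m1"
      using A ab(1,3) by auto
    then have "a = a'"
      using eq by (simp add: grp_length)
    then show "a = a' \<and> b = b'"
      using eq inj_on_gadd B ab by (auto dest: inj_onD)
  qed
  have P_grp: "P_set m2 A t B \<subseteq> grp (m1 @ m2)"
    using A B by (auto simp: P_set_def append_mem_grp grp_length gadd_in_grp[OF pos])
  show ?thesis
    unfolding pd_tiles_iff[OF P_grp]
  proof (intro exI[of _ h] conjI ballI)
    fix x assume "x \<in> grp (m1 @ m2)"
    then obtain g y where x: "x = g @ y" "g \<in> grp m1" "y \<in> grp m2"
      by (rule grp_appendE)
    then show "0 \<le> h x"
      using h1(1) h2(1) by (simp add: h_append grp_length)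
    have "(\<Sum>z\<in>P_set m2 A t B. h (gsub (m1 @ m2) x z)) =
        (\<Sum>(a, b)\<in>A \<times> B. h (gsub (m1 @ m2) (g @ y) (a @ gadd m2 (t a) b)))"
      unfolding P x(1) sum.reindex[OF inj] by (simp add: comp_def case_prod_unfold)
    also have "\<dots> = (\<Sum>(a, b)\<in>A \<times> B. h1 (gsub m1 g a) * h2 (gsub m2 (gsub m2 y (t a)) b))"
      using x(2) A by (intro sum.cong) (auto simp: gsub_append h_append grp_length gsub_gadd_right)
    also have "\<dots> = (\<Sum>a\<in>A. \<Sum>b\<in>B. h1 (gsub m1 g a) * h2 (gsub m2 (gsub m2 y (t a)) b))"
      by (simp add: sum.cartesian_product)
    also have "\<dots> = (\<Sum>a\<in>A. h1 (gsub m1 g a))"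
      using h2(3) t gsub_in_grp[OF pos] by (simp add: sum_distrib_left[symmetric])
    finally show "(\<Sum>z\<in>P_set m2 A t B. h (gsub (m1 @ m2) x z)) = 1"
      using h1(3) x(2) by simp
  next
    show "h (gzero (m1 @ m2)) = 1"
      using h1(2) h2(2) h_append[of "gzero m1"] by (simp add: gzero_append)
  next
    fix \<xi> assume "\<xi> \<in> grp (m1 @ m2)"
    then obtain \<xi>1 \<xi>2 where \<xi>: "\<xi> = \<xi>1 @ \<xi>2" "\<xi>1 \<in> grp m1" "\<xi>2 \<in> grp m2"
      by (rule grp_appendE)
    have "fourier (m1 @ m2) (\<lambda>x. complex_of_real (h x)) \<xi> =
        fourier m1 (\<lambda>x. complex_of_real (h1 x)) \<xi>1 * fourier m2 (\<lambda>y. complex_of_real (h2 y)) \<xi>2"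
      unfolding h_def of_real_mult \<xi>(1) by (rule fourier_append) (use \<xi>(2) grp_length in blast)
    then show "0 \<le> fourier (m1 @ m2) (\<lambda>x. complex_of_real (h x)) \<xi>"
      using h1(4) h2(4) \<xi> by simp
  qed
qed

section \<open>The tile \<open>A\<close>\<close>

lemma inj_on_fibre: "inj_on f A \<Longrightarrow> a \<in> A \<Longrightarrow> {x \<in> A. f a = f x} = {a}"
  by (auto dest: inj_onD)

lemma tiling_kernel_by_transversal:
  fixes w :: "nat \<Rightarrow> int"
  assumes m: "0 < m" and \<Lambda>: "\<Lambda> \<subseteq> grp (replicate n m)"
    and bij: "bij_betw (\<lambda>c. (\<Sum>i<n. w i * c!i) mod m) \<Lambda> {0..<m}"
  shows "tiling (replicate n m) {x \<in> grp (replicate n m). (\<Sum>i<n. w i * x!i) mod m = 0} \<Lambda>"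
proof -
  let ?ms = "replicate n m" and ?\<phi> = "\<lambda>x. \<Sum>i<n. w i * x!i"
  let ?K = "{x \<in> grp ?ms. ?\<phi> x mod m = 0}"
  have pos: "set ?ms \<subseteq> {0<..}"
    using m by (simp add: set_replicate_conv_if)
  have "card {c\<in>\<Lambda>. gsub ?ms x c \<in> ?K} = 1" for x
  proof -
    have mem: "gsub ?ms x c \<in> ?K \<longleftrightarrow> ?\<phi> x mod m = ?\<phi> c mod m" for c
    proof -
      have "?\<phi> (gsub ?ms x c) = (\<Sum>i<n. w i * ((x!i - c!i) mod m))"
        by (intro sum.cong) simp_all
      then have "?\<phi> (gsub ?ms x c) mod m = (\<Sum>i<n. w i * ((x!i - c!i) mod m) mod m) mod m"
        by (simp only: mod_sum_eq)
      also have "\<dots> = (?\<phi> x - ?\<phi> c) mod m"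
        by (simp add: mod_mult_right_eq mod_sum_eq right_diff_distrib sum_subtractf)
      finally have "gsub ?ms x c \<in> ?K \<longleftrightarrow> (?\<phi> x - ?\<phi> c) mod m = 0"
        using gsub_in_grp[OF pos] by simp
      then show ?thesis
        by (simp add: mod_eq_dvd_iff dvd_eq_mod_eq_0)
    qed
    have "?\<phi> x mod m \<in> (\<lambda>c. ?\<phi> c mod m) ` \<Lambda>"
      unfolding bij_betw_imp_surj_on[OF bij] using m by simp
    then obtain c0 where c0: "c0 \<in> \<Lambda>" "?\<phi> x mod m = ?\<phi> c0 mod m"
      by blast
    have "{c\<in>\<Lambda>. gsub ?ms x c \<in> ?K} = {c\<in>\<Lambda>. ?\<phi> c0 mod m = ?\<phi> c mod m}"
      by (simp only: mem c0(2))
    also have "\<dots> = {c0}"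
      by (rule inj_on_fibre[OF bij_betw_imp_inj_on[OF bij] c0(1)])
    finally show ?thesis
      by simp
  qed
  then show ?thesis
    using \<Lambda> unfolding tiling_def by blast
qed

lemma tiling_fibres:
  assumes q: "0 < q" and F: "\<forall>k<q. tiling ms (F k) \<Lambda>"
  shows "tiling (ms @ [int q]) {x @ [int k] |x k. k < q \<and> x \<in> F k} ((\<lambda>c. c @ [0]) ` \<Lambda>)"
proof -
  let ?A = "{x @ [int k] |x k. k < q \<and> x \<in> F k}"
  have \<Lambda>: "\<Lambda> \<subseteq> grp ms"
    using F q by (simp add: tiling_def)
  have singleton_grp: "[k] \<in> grp [m] \<longleftrightarrow> 0 \<le> k \<and> k < m" for k m :: int
    by (simp add: grp_def)
  have mem: "y @ [int k] \<in> ?A \<longleftrightarrow> k < q \<and> y \<in> F k" for y k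
    by simp
  have "card {c' \<in> (\<lambda>c. c @ [0]) ` \<Lambda>. gsub (ms @ [int q]) z c' \<in> ?A} = 1"
    if z_grp: "z \<in> grp (ms @ [int q])" for z
  proof -
    obtain x y where z: "z = x @ y" "x \<in> grp ms" "y \<in> grp [int q]"
      using z_grp by (rule grp_appendE)
    define k where "k = nat (y!0)"
    have k: "y = [int k]" "k < q"
      using z(3) by (auto simp: grp_def k_def length_Suc_conv)
    have "gsub [int q] [int k] [0] = [int k]"
      using k(2) by (simp add: gsub_def)
    then have "gsub (ms @ [int q]) z (c @ [0]) = gsub ms x c @ [int k]" if "c \<in> \<Lambda>" for c
      using z k that \<Lambda> grp_length by (simp add: gsub_append subset_eq)
    then have "{c' \<in> (\<lambda>c. c @ [0]) ` \<Lambda>. gsub (ms @ [int q]) z c' \<in> ?A} =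
        (\<lambda>c. c @ [0]) ` {c \<in> \<Lambda>. gsub ms x c \<in> F k}"
      using k(2) mem by auto
    moreover have "inj_on (\<lambda>c. c @ [0 :: int]) X" for X
      by (simp add: inj_on_def)
    ultimately show ?thesis
      using F k(2) z(2) by (simp add: card_image tiling_def)
  qed
  moreover have "?A \<subseteq> grp (ms @ [int q])"
  proof clarify
    fix x k assume "k < q" "x \<in> F k"
    then have "x \<in> grp ms"
      using F by (auto simp: tiling_def)
    then show "x @ [int k] \<in> grp (ms @ [int q])"
      using \<open>k < q\<close> by (simp add: append_mem_grp grp_length singleton_grp)
  qed
  moreover have "(\<lambda>c. c @ [0]) ` \<Lambda> \<subseteq> grp (ms @ [int q])"
    using \<Lambda> q grp_length by (auto simp: append_mem_grp singleton_grp)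
  ultimately show ?thesis
    by (simp add: tiling_def)
qed

definition basis_with_zero :: "int list set" where
  "basis_with_zero = insert (replicate 5 0) ((\<lambda>j. (replicate 5 0)[j := 1]) ` {..<5})"

abbreviation perm_weight :: "(nat \<Rightarrow> nat) \<Rightarrow> int list \<Rightarrow> int" where
  "perm_weight \<pi> c \<equiv> (\<Sum>i<5. int (\<pi> i + 1) * c!i) mod 6"

lemma basis_with_zero_subset_grp: "basis_with_zero \<subseteq> grp (replicate 5 6)"
  by (auto simp: basis_with_zero_def grp_def nth_list_update)

lemma card_basis_with_zero_le: "card basis_with_zero \<le> 6"
proof -
  have "card ((\<lambda>j. (replicate 5 0)[j := 1]) ` {..<5::nat}) \<le> 5"
    using card_image_le[of "{..<5::nat}"] by simp
  then show ?thesis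
    by (auto simp: basis_with_zero_def card_insert_if)
qed

lemma perm_weight_unit_vector:
  assumes "\<pi> permutes {..<5}" "j < 5"
  shows "perm_weight \<pi> ((replicate 5 0)[j := 1]) = int (\<pi> j) + 1"
proof -
  have "\<pi> j < 5"
    using permutes_in_image[OF assms(1), of j] assms(2) by simp
  moreover have "(\<Sum>i<5. int (\<pi> i + 1) * (replicate 5 0)[j := 1] ! i) = int (\<pi> j + 1)"
    using assms(2) by (simp add: nth_list_update if_distrib[of "\<lambda>x. _ * x"] cong: if_cong)
  ultimately show ?thesis
    by simp
qed

lemma perm_weight_image:
  assumes "\<pi> permutes {..<5}"
  shows "perm_weight \<pi> ` basis_with_zero = {0..<6}"
proof -
  have "(\<lambda>j. perm_weight \<pi> ((replicate 5 0)[j := 1])) ` {..<5} = (\<lambda>j. int (\<pi> j) + 1) ` {..<5}"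
    by (rule image_cong[OF refl]) (rule perm_weight_unit_vector[OF assms], simp)
  then have "perm_weight \<pi> ` basis_with_zero = insert 0 ((\<lambda>j. int (\<pi> j) + 1) ` {..<5})"
    unfolding basis_with_zero_def image_insert image_image by simp
  also have "(\<lambda>j. int (\<pi> j) + 1) ` {..<5} = (\<lambda>k. int k + 1) ` \<pi> ` {..<5}"
    by (simp add: image_image)
  also have "\<dots> = {1..<6}"
  proof (rule set_eqI)
    fix v :: int
    show "v \<in> (\<lambda>k. int k + 1) ` \<pi> ` {..<5} \<longleftrightarrow> v \<in> {1..<6}"
      unfolding permutes_image[OF assms]
      by (auto intro: image_eqI[of _ _ "nat (v - 1)"])
  qed
  finally show ?thesis
    by auto
qed

lemma bij_betw_perm_weight:
  assumes "\<pi> permutes {..<5}"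
  shows "bij_betw (perm_weight \<pi>) basis_with_zero {0..<6}"
proof -
  have fin: "finite basis_with_zero"
    by (simp add: basis_with_zero_def)
  have "card (perm_weight \<pi> ` basis_with_zero) = 6"
    unfolding perm_weight_image[OF assms] by simp
  then have "card (perm_weight \<pi> ` basis_with_zero) = card basis_with_zero"
    using card_basis_with_zero_le card_image_le[OF fin, of "perm_weight \<pi>"] by linarith
  then show ?thesis
    using fin perm_weight_image[OF assms] by (simp only: bij_betw_def eq_card_imp_inj_on)
qed

lemma A_perm_tiling:
  assumes "\<pi> permutes {..<5}"
  shows "tiling (replicate 5 6) (A_perm \<pi>) basis_with_zero"
  unfolding A_perm_def
  by (rule tiling_kernel_by_transversal[OF _ basis_with_zero_subset_grp bij_betw_perm_weight[OF assms]])
    simp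

lemma A_set_tiling:
  assumes "0 < q" "\<forall>k<120. e k permutes {..<5}"
  shows "tiling (replicate 5 6 @ [int q]) (A_set e q) ((\<lambda>c. c @ [0]) ` basis_with_zero)"
  unfolding A_set_def by (rule tiling_fibres) (use assms A_perm_tiling in auto)

theorem lemma3p3:
  fixes p q :: nat and e :: "nat \<Rightarrow> nat \<Rightarrow> nat"
    and B :: "int list set" and t :: "int list \<Rightarrow> int list"
  assumes "prime p" "p > 3" "prime q" "q > 6 * p ^ 4"
    and "bij_betw e {..<120} {\<pi>. \<pi> permutes {..<5}}"
    and "B \<subseteq> grp (replicate 4 (int p))"
    and "spectral (replicate 4 (int p)) B"
    and "card B = 2 * p"
    and "\<forall>a\<in>A_set e q. t a \<in> grp (replicate 4 (int p))"
  shows "pd_tiles (replicate 5 6 @ [int q] @ replicate 4 (int p))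
           (P_set (replicate 4 (int p)) (A_set e q) t B)"
proof -
  have "0 < p" "0 < q"
    using assms(1,3) prime_gt_0_nat by blast+
  then have pos_G: "set (replicate 5 6 @ [int q]) \<subseteq> {0<..}"
    and pos_H: "set (replicate 4 (int p)) \<subseteq> {0<..}"
    by auto
  have "\<forall>k<120. e k permutes {..<5}"
    using bij_betw_apply[OF assms(5)] by simp
  then have A_tiling: "tiling (replicate 5 6 @ [int q]) (A_set e q) ((\<lambda>c. c @ [0]) ` basis_with_zero)"
    using A_set_tiling \<open>0 < q\<close> by blast
  have "B \<noteq> {}"
    using assms(8) \<open>0 < p\<close> by auto
  then have tiles_B: "pd_tiles (replicate 4 (int p)) B"
    using pd_tiles_if_spectral pos_H assms(6,7) by blast
  have tiles_A: "pd_tiles (replicate 5 6 @ [int q]) (A_set e q)"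
    using pd_tiles_if_tiling pos_G A_tiling by blast
  have "A_set e q \<subseteq> grp (replicate 5 6 @ [int q])"
    using A_tiling by (simp add: tiling_def)
  from pd_tiles_P_set[OF pos_H this assms(6,9) tiles_A tiles_B] show ?thesis
    by simp
qed

end
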